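(* Fix $m\ge 2$, $y\in\{1,\dots,m\}$, $1\le k\le m-1$. Let $L^*_k:\mathbb{R}^m\to\mathbb{R}\cup\{+\infty\}$ be $$L^*_k(v)=\begin{cases}\sum_{j\ne y}v_j\log v_j+(1+v_y)\log(1+v_y), & \text{if }\langle\mathbf{1},v\rangle=0\text{ and }v_{\setminus y}\in\Delta^\alpha_k(1),\\ +\infty,&\text{otherwise,}\end{cases}$$ and let the top-$k$ entropy loss be its convex conjugate $L_k(u)=\sup_{v\in\mathbb{R}^m}\{\langle u,v\rangle-L^*_k(v)\}$. Then for every $u\in\mathbb{R}^m$ with $u_y=0$, $$L_k(u)=\max\Big\{\langle u_{\setminus y},x\rangle-(1-s)\log(1-s)-\langle x,\log x\rangle\ :\ x\in\Delta^\alpha_k(1),\ \langle\mathbf{1},x\rangle=s\Big\},$$ and for $k=1$ this equals the softmax loss: $L_1(u)=\log\big(1+\sum_{j\ne y}e^{u_j}\big)=\log\sum_{j}\exp(u_j-u_y)$.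
   Context: $v_{\setminus y}\in\mathbb{R}^{m-1}$ is $v$ with its $y$-th coordinate deleted; $\mathbf{1}$ is the all-ones vector; $\langle x,\log x\rangle=\sum_j x_j\log x_j$ with $0\log0=0$. The top-$k$ simplex ($\alpha$ version) of radius $r$ in $\mathbb{R}^{m-1}$ is $\Delta^\alpha_k(r)=\{x:\ \langle\mathbf{1},x\rangle\le r,\ 0\le x_i\le\tfrac1k\langle\mathbf{1},x\rangle\ \forall i\}$. In the intended application $u_j=f_j(x)-f_y(x)$, so $u_y=0$. *)

theory Defs
  imports "HOL-Analysis.Analysis"
begin

text \<open>Vectors in R^m are represented as functions nat => real, coordinates indexed by {1..m}.
  Vectors in R^(m-1) obtained by deleting coordinate y are functions supported on {1..m} - {y}.\<close>

definition xlogx :: "real \<Rightarrow> real" where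
  "xlogx t = (if t = 0 then 0 else t * ln t)"

definition del_coord :: "nat \<Rightarrow> nat \<Rightarrow> (nat \<Rightarrow> real) \<Rightarrow> (nat \<Rightarrow> real)" where
  "del_coord m y v = (\<lambda>j. if j \<in> {1..m} - {y} then v j else 0)"

definition topk_simplex :: "nat set \<Rightarrow> nat \<Rightarrow> real \<Rightarrow> (nat \<Rightarrow> real) set" where
  "topk_simplex I k r = {x. (\<forall>j. j \<notin> I \<longrightarrow> x j = 0) \<and> sum x I \<le> r \<and>
      (\<forall>i\<in>I. 0 \<le> x i \<and> x i \<le> sum x I / real k)}"

definition Lstar :: "nat \<Rightarrow> nat \<Rightarrow> nat \<Rightarrow> (nat \<Rightarrow> real) \<Rightarrow> ereal" where
  "Lstar m y k v =
     (if sum v {1..m} = 0 \<and> del_coord m y v \<in> topk_simplex ({1..m} - {y}) k 1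
      then ereal ((\<Sum>j\<in>{1..m} - {y}. xlogx (v j)) + xlogx (1 + v y))
      else \<infinity>)"

definition Lk :: "nat \<Rightarrow> nat \<Rightarrow> nat \<Rightarrow> (nat \<Rightarrow> real) \<Rightarrow> ereal" where
  "Lk m y k u = (SUP v \<in> {v. \<forall>j. j \<notin> {1..m} \<longrightarrow> v j = 0}.
                    ereal (\<Sum>j\<in>{1..m}. u j * v j) - Lstar m y k v)"

end

theory Submission imports Defs "HOL-Real_Asymp.Real_Asymp" begin

text \<open>On the hyperplane \<open>\<Sum> v = 0\<close> the coordinate \<open>v y\<close> is determined by the other
  coordinates \<open>x\<close>, and \<open>u y = 0\<close> removes it from \<open>\<langle>u, v\<rangle>\<close>. So the conjugate is the supremum
  of the continuous objective \<open>\<langle>u, x\<rangle> - (1 - s) ln (1 - s) - \<langle>x, ln x\<rangle>\<close>, \<open>s = \<Sum> x\<close>, over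
  the compact top-k simplex, hence a maximum. For \<open>k = 1\<close> the constraint \<open>x i \<le> s\<close> is
  vacuous, and the Gibbs inequality \<open>p a - p ln p \<le> p ln Z + exp a / Z - p\<close>, summed over
  the coordinates of \<open>(x, 1 - s)\<close>, bounds the objective by \<open>ln Z\<close>, \<open>Z = 1 + \<Sum> exp (u j)\<close>,
  with equality at the softmax point \<open>x j = exp (u j) / Z\<close>.\<close>

lemma continuous_on_xlogx: "continuous_on {0..} xlogx"
proof -
  have "continuous (at t within {0..}) (\<lambda>t. t * ln t)" if "t \<ge> 0" for t :: real
  proof (cases "t = 0")
    case True
    have "((\<lambda>x::real. x * ln x) \<longlongrightarrow> 0) (at_right 0)" by real_asymp
    then show ?thesis using True
      by (simp add: continuous_within at_within_Ici_at_right)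
  next
    case False
    then have "continuous (at t) (\<lambda>t. t * ln t)"
      using that by (intro continuous_intros) auto
    then show ?thesis using continuous_at_imp_continuous_at_within by blast
  qed
  moreover have "xlogx = (\<lambda>t. t * ln t)" by (simp add: xlogx_def fun_eq_iff)
  ultimately show ?thesis
    using continuous_on_eq_continuous_within by (metis atLeast_iff)
qed

lemma xlogx_mult_le_exp:
  fixes p a Z :: real
  assumes "p \<ge> 0" "Z > 0"
  shows "p * a - xlogx p - p * ln Z \<le> exp a / Z - p"
proof (cases "p = 0")
  case True then show ?thesis using assms by (simp add: xlogx_def)
next
  case False
  then have p: "p > 0" using assms by simp
  have "ln (exp a / (Z * p)) \<le> exp a / (Z * p) - 1"
    by (rule ln_le_minus_one) (use p assms in simp)
  moreover have "ln (exp a / (Z * p)) = a - ln Z - ln p"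
    using p assms by (simp add: ln_div ln_mult)
  ultimately have "p * (a - ln Z - ln p) \<le> p * (exp a / (Z * p) - 1)"
    using p by (simp add: mult_left_mono)
  then show ?thesis using p by (simp add: xlogx_def algebra_simps)
qed

lemma continuous_on_coordinate[continuous_intros]:
  "continuous_on S (\<lambda>x::nat \<Rightarrow> real. x j)"
  by (rule continuous_on_subset[OF continuous_on_product_coordinates]) auto

lemma topk_simplexD:
  assumes "x \<in> topk_simplex I k 1" "k \<ge> 1"
  shows "\<And>j. j \<notin> I \<Longrightarrow> x j = 0" "\<And>i. i \<in> I \<Longrightarrow> 0 \<le> x i"
    "sum x I \<le> 1" "\<And>i. i \<in> I \<Longrightarrow> x i \<le> 1"
proof -
  show "\<And>j. j \<notin> I \<Longrightarrow> x j = 0" "\<And>i. i \<in> I \<Longrightarrow> 0 \<le> x i" and s: "sum x I \<le> 1"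
    using assms by (simp_all add: topk_simplex_def)
  fix i assume i: "i \<in> I"
  have "0 \<le> sum x I" using assms by (simp add: topk_simplex_def sum_nonneg)
  have "x i \<le> sum x I / real k" using assms i by (simp add: topk_simplex_def)
  also have "\<dots> \<le> sum x I" using \<open>0 \<le> sum x I\<close> assms(2)
    by (simp add: divide_le_eq mult_le_cancel_left1)
  finally show "x i \<le> 1" using s by simp
qed

lemma zero_in_topk_simplex: "(\<lambda>_. 0) \<in> topk_simplex I k 1"
  by (simp add: topk_simplex_def)

lemma closed_topk_simplex:
  assumes "finite I"
  shows "closed (topk_simplex I k 1)"
proof -
  have sum_cont: "continuous_on UNIV (\<lambda>x::nat \<Rightarrow> real. sum x I)"
    by (intro continuous_intros continuous_on_sum)
  have "topk_simplex I k 1 = {x. \<forall>j. j \<notin> I \<longrightarrow> x j = 0} \<inter> {x. sum x I \<le> 1} \<inter>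
      {x::nat \<Rightarrow> real. \<forall>i. i \<in> I \<longrightarrow> 0 \<le> x i \<and> x i \<le> sum x I * inverse (real k)}"
    by (auto simp: topk_simplex_def divide_inverse)
  moreover have "closed {x::nat \<Rightarrow> real. \<forall>j. j \<notin> I \<longrightarrow> x j = 0}"
    by (intro closed_Collect_all closed_Collect_imp closed_Collect_eq) auto
  moreover have "closed {x::nat \<Rightarrow> real. sum x I \<le> 1}"
    by (intro closed_Collect_le sum_cont continuous_intros)
  moreover have "closed {x::nat \<Rightarrow> real. \<forall>i. i \<in> I \<longrightarrow> 0 \<le> x i \<and> x i \<le> sum x I * inverse (real k)}"
    by (intro closed_Collect_all closed_Collect_imp closed_Collect_conj closed_Collect_le
        continuous_intros sum_cont) auto
  ultimately show ?thesis by (simp add: closed_Int)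
qed

lemma compact_topk_simplex:
  assumes "finite I" "k \<ge> 1"
  shows "compact (topk_simplex I k 1)"
proof -
  define B where "B = PiE UNIV (\<lambda>j::nat. if j \<in> I then {0..1::real} else {0})"
  have "compactin (product_topology (\<lambda>_. euclidean) UNIV) B"
    unfolding B_def by (subst compactin_PiE) auto
  then have "compact B" by (simp add: euclidean_product_topology)
  moreover have "topk_simplex I k 1 \<subseteq> B"
    using topk_simplexD[OF _ assms(2)] by (auto simp: B_def PiE_iff)
  ultimately show ?thesis
    using compact_Int_closed[OF _ closed_topk_simplex[OF assms(1)]] by (metis inf.absorb2)
qed

definition entropy_objective :: "(nat \<Rightarrow> real) \<Rightarrow> nat set \<Rightarrow> (nat \<Rightarrow> real) \<Rightarrow> real" where
  "entropy_objective u I x =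
     (\<Sum>j\<in>I. u j * x j) - xlogx (1 - sum x I) - (\<Sum>j\<in>I. xlogx (x j))"

lemma continuous_on_entropy_objective:
  assumes "k \<ge> 1"
  shows "continuous_on (topk_simplex I k 1) (entropy_objective u I)"
proof -
  have "continuous_on (topk_simplex I k 1) (\<lambda>x. xlogx (1 - sum x I))"
    by (rule continuous_on_compose2[OF continuous_on_xlogx])
      (auto intro!: continuous_intros dest: topk_simplexD(3)[OF _ assms])
  moreover have "continuous_on (topk_simplex I k 1) (\<lambda>x. xlogx (x j))" if "j \<in> I" for j
    by (rule continuous_on_compose2[OF continuous_on_xlogx])
      (auto intro!: continuous_intros dest: topk_simplexD(2)[OF _ assms that])
  ultimately show ?thesis unfolding entropy_objective_def
    by (intro continuous_intros continuous_on_sum) auto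
qed

lemma entropy_objective_le_ln_partition:
  assumes nonneg: "\<And>i. i \<in> I \<Longrightarrow> 0 \<le> x i" and le1: "sum x I \<le> 1"
  shows "entropy_objective u I x \<le> ln (1 + (\<Sum>j\<in>I. exp (u j)))"
proof -
  define Z where "Z = 1 + (\<Sum>j\<in>I. exp (u j))"
  have Z: "Z > 0" unfolding Z_def by (smt (verit) exp_gt_zero sum_nonneg)
  have "(\<Sum>j\<in>I. x j * u j - xlogx (x j) - x j * ln Z) \<le> (\<Sum>j\<in>I. exp (u j) / Z - x j)"
    by (rule sum_mono) (use xlogx_mult_le_exp nonneg Z in auto)
  moreover have "(1 - sum x I) * 0 - xlogx (1 - sum x I) - (1 - sum x I) * ln Z
      \<le> exp 0 / Z - (1 - sum x I)"
    by (rule xlogx_mult_le_exp) (use le1 Z in auto)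
  moreover have "(\<Sum>j\<in>I. exp (u j) / Z - x j) + (exp 0 / Z - (1 - sum x I))
      = ((\<Sum>j\<in>I. exp (u j)) + 1) / Z - 1"
    by (simp add: sum_subtractf sum_divide_distrib add_divide_distrib)
  moreover have "((\<Sum>j\<in>I. exp (u j)) + 1) / Z = 1"
    using Z by (simp add: Z_def add.commute)
  moreover have "(\<Sum>j\<in>I. x j * u j - xlogx (x j) - x j * ln Z) =
      (\<Sum>j\<in>I. u j * x j) - (\<Sum>j\<in>I. xlogx (x j)) - sum x I * ln Z"
    by (simp add: sum_subtractf sum_distrib_left sum_distrib_right mult.commute)
  ultimately show ?thesis
    unfolding entropy_objective_def Z_def[symmetric] by (simp add: algebra_simps)
qed

lemma softmax_attains_ln_partition:
  assumes "finite I"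
  shows "\<exists>x\<in>topk_simplex I 1 1. entropy_objective u I x = ln (1 + (\<Sum>j\<in>I. exp (u j)))"
proof -
  define S where "S = (\<Sum>j\<in>I. exp (u j))"
  define Z where "Z = 1 + S"
  have S: "S \<ge> 0" unfolding S_def by (simp add: sum_nonneg)
  then have Z: "Z > 0" by (simp add: Z_def)
  define x where "x = (\<lambda>j. if j \<in> I then exp (u j) / Z else 0)"
  have sum_x: "sum x I = S / Z" by (simp add: x_def S_def sum_divide_distrib)
  have "x \<in> topk_simplex I 1 1"
    unfolding topk_simplex_def
  proof (intro CollectI conjI ballI allI impI)
    show "sum x I \<le> 1" using sum_x Z S by (simp add: Z_def)
    fix i assume "i \<in> I"
    then show "0 \<le> x i" and "x i \<le> sum x I / real 1"
      using Z member_le_sum[of i I x] assms by (auto simp: x_def)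
  qed (simp add: x_def)
  moreover have "entropy_objective u I x = ln Z"
  proof -
    have "(\<Sum>j\<in>I. xlogx (x j)) = (\<Sum>j\<in>I. u j * x j - x j * ln Z)"
      using Z by (intro sum.cong) (auto simp: x_def xlogx_def ln_div field_simps)
    then have "(\<Sum>j\<in>I. xlogx (x j)) = (\<Sum>j\<in>I. u j * x j) - sum x I * ln Z"
      by (simp add: sum_subtractf sum_distrib_right)
    moreover have "1 - sum x I = 1 / Z" using sum_x Z by (simp add: Z_def field_simps)
    ultimately have "entropy_objective u I x = (S / Z) * ln Z + (1 / Z) * ln Z"
      unfolding entropy_objective_def sum_x using Z by (simp add: xlogx_def ln_div)
    also have "\<dots> = ((1 + S) / Z) * ln Z" by (simp add: add_divide_distrib algebra_simps)
    also have "\<dots> = ln Z" using Z by (simp add: Z_def)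
    finally show ?thesis .
  qed
  ultimately show ?thesis by (auto simp: Z_def S_def)
qed

lemma conjugate_term_eq_entropy_objective:
  assumes y: "y \<in> {1..m}" and uy: "u y = 0"
    and v: "sum v {1..m} = 0" "del_coord m y v \<in> topk_simplex ({1..m} - {y}) k 1"
  shows "ereal (\<Sum>j\<in>{1..m}. u j * v j) - Lstar m y k v
       = ereal (entropy_objective u ({1..m} - {y}) (del_coord m y v))"
proof -
  let ?I = "{1..m} - {y}"
  have split: "sum g {1..m} = g y + sum g ?I" for g :: "nat \<Rightarrow> real"
    using sum.remove[of "{1..m}" y] y by simp
  have "sum (del_coord m y v) ?I = sum v ?I"
    and "(\<Sum>j\<in>?I. xlogx (del_coord m y v j)) = (\<Sum>j\<in>?I. xlogx (v j))"
    and "(\<Sum>j\<in>?I. u j * del_coord m y v j) = (\<Sum>j\<in>?I. u j * v j)"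
    by (auto intro: sum.cong simp: del_coord_def)
  moreover have "1 + v y = 1 - sum v ?I"
    using v(1) split[of v] by simp
  ultimately show ?thesis
    using v split[of "\<lambda>j. u j * v j"] uy
    by (simp add: Lstar_def entropy_objective_def)
qed

lemma topk_simplex_lift:
  assumes y: "y \<in> {1..m}" and x: "x \<in> topk_simplex ({1..m} - {y}) k 1"
  defines "v \<equiv> x(y := - sum x ({1..m} - {y}))"
  shows "\<forall>j. j \<notin> {1..m} \<longrightarrow> v j = 0" "sum v {1..m} = 0" "del_coord m y v = x"
proof -
  have outside: "\<And>j. j \<notin> {1..m} - {y} \<Longrightarrow> x j = 0"
    using x by (simp add: topk_simplex_def)
  then show "\<forall>j. j \<notin> {1..m} \<longrightarrow> v j = 0" "del_coord m y v = x"
    using y by (auto simp: v_def del_coord_def)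
  have "sum v ({1..m} - {y}) = sum x ({1..m} - {y})" by (intro sum.cong) (auto simp: v_def)
  then show "sum v {1..m} = 0"
    using sum.remove[of "{1..m}" y v] y by (simp add: v_def)
qed

lemma Lk_eq_SUP_entropy_objective:
  assumes y: "y \<in> {1..m}" and uy: "u y = 0"
  shows "Lk m y k u = (SUP x\<in>topk_simplex ({1..m} - {y}) k 1.
                         ereal (entropy_objective u ({1..m} - {y}) x))"
    (is "_ = (SUP x\<in>?S. ?F x)")
proof (rule antisym)
  show "Lk m y k u \<le> (SUP x\<in>?S. ?F x)"
    unfolding Lk_def
  proof (rule SUP_least)
    fix v :: "nat \<Rightarrow> real"
    show "ereal (\<Sum>j\<in>{1..m}. u j * v j) - Lstar m y k v \<le> (SUP x\<in>?S. ?F x)"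
    proof (cases "sum v {1..m} = 0 \<and> del_coord m y v \<in> ?S")
      case True
      then show ?thesis
        using conjugate_term_eq_entropy_objective[where u = u and v = v, OF y uy]
        by (auto intro: SUP_upper2)
    next
      case False
      then have "Lstar m y k v = \<infinity>" unfolding Lstar_def by auto
      then show ?thesis by simp
    qed
  qed
  show "(SUP x\<in>?S. ?F x) \<le> Lk m y k u"
  proof (rule SUP_least)
    fix x assume x: "x \<in> ?S"
    define v where "v = x(y := - sum x ({1..m} - {y}))"
    note lift = topk_simplex_lift[OF y x, folded v_def]
    have "ereal (\<Sum>j\<in>{1..m}. u j * v j) - Lstar m y k v = ?F x"
      using conjugate_term_eq_entropy_objective[where u = u and v = v, OF y uy lift(2)] lift(3) x
      by simp
    then show "?F x \<le> Lk m y k u"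
      unfolding Lk_def using lift(1) by (intro SUP_upper2) auto
  qed
qed

lemma Lk_attains_max:
  assumes y: "y \<in> {1..m}" and k: "k \<ge> 1" and uy: "u y = 0"
  obtains x0 where "x0 \<in> topk_simplex ({1..m} - {y}) k 1"
    "Lk m y k u = ereal (entropy_objective u ({1..m} - {y}) x0)"
    "\<And>x. x \<in> topk_simplex ({1..m} - {y}) k 1 \<Longrightarrow>
       entropy_objective u ({1..m} - {y}) x \<le> entropy_objective u ({1..m} - {y}) x0"
proof -
  let ?S = "topk_simplex ({1..m} - {y}) k 1" and ?F = "entropy_objective u ({1..m} - {y})"
  obtain x0 where x0: "x0 \<in> ?S" and maximal: "\<And>x. x \<in> ?S \<Longrightarrow> ?F x \<le> ?F x0"
  proof -
    have "?S \<noteq> {}" using zero_in_topk_simplex by blast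
    from continuous_attains_sup[OF compact_topk_simplex[OF _ k] this
        continuous_on_entropy_objective[OF k, of _ u]]
    show ?thesis using that by blast
  qed
  have "(SUP x\<in>?S. ereal (?F x)) = ereal (?F x0)"
  proof (rule antisym)
    show "(SUP x\<in>?S. ereal (?F x)) \<le> ereal (?F x0)" by (rule SUP_least) (use maximal in simp)
  qed (rule SUP_upper[OF x0])
  with that x0 maximal show ?thesis
    by (simp add: Lk_eq_SUP_entropy_objective[where u = u, OF y uy])
qed

theorem proposition8:
  fixes m y k :: nat and u :: "nat \<Rightarrow> real"
  assumes "m \<ge> 2" and "y \<in> {1..m}" and "1 \<le> k" and "k \<le> m - 1"
    and "u y = 0"
  shows "(\<exists>x\<in>topk_simplex ({1..m} - {y}) k 1.
            Lk m y k u = ereal ((\<Sum>j\<in>{1..m} - {y}. u j * x j)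
                 - xlogx (1 - sum x ({1..m} - {y})) - (\<Sum>j\<in>{1..m} - {y}. xlogx (x j))))
       \<and> (\<forall>x\<in>topk_simplex ({1..m} - {y}) k 1.
            ereal ((\<Sum>j\<in>{1..m} - {y}. u j * x j)
                 - xlogx (1 - sum x ({1..m} - {y})) - (\<Sum>j\<in>{1..m} - {y}. xlogx (x j)))
            \<le> Lk m y k u)
       \<and> (k = 1 \<longrightarrow>
            Lk m y k u = ereal (ln (1 + (\<Sum>j\<in>{1..m} - {y}. exp (u j)))) \<and>
            Lk m y k u = ereal (ln (\<Sum>j\<in>{1..m}. exp (u j - u y))))"
proof -
  let ?I = "{1..m} - {y}"
  obtain x0 where x0: "x0 \<in> topk_simplex ?I k 1"
      and L: "Lk m y k u = ereal (entropy_objective u ?I x0)"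
      and maximal: "\<And>x. x \<in> topk_simplex ?I k 1 \<Longrightarrow>
                       entropy_objective u ?I x \<le> entropy_objective u ?I x0"
    using Lk_attains_max assms by blast
  have softmax: "Lk m y k u = ereal (ln (1 + (\<Sum>j\<in>?I. exp (u j))))" if "k = 1"
  proof -
    obtain xs where "xs \<in> topk_simplex ?I 1 1"
        "entropy_objective u ?I xs = ln (1 + (\<Sum>j\<in>?I. exp (u j)))"
      using softmax_attains_ln_partition by blast
    then show ?thesis
      using L maximal[of xs] that topk_simplexD[OF x0] assms(3)
        entropy_objective_le_ln_partition[of ?I x0 u] by force
  qed
  have "(\<Sum>j\<in>{1..m}. exp (u j - u y)) = 1 + (\<Sum>j\<in>?I. exp (u j))"
    using sum.remove[of "{1..m}" y "\<lambda>j. exp (u j - u y)"] assms by simp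
  then show ?thesis
    using x0 L maximal softmax unfolding entropy_objective_def by auto
qed

end
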